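(* For all $k\in\mathbb N_+$ and $T\ge0$, $$v(k,T)\ \ge\ \sum_{n<k-1}F\Big(\frac{k}{n+1}\Big)\,\mathbb P(N(T)=n)+kF(1)\,\mathbb P(N(T)\ge k-1).$$
   Context: Let $\lambda>0$ and let $N$ be a Poisson process with intensity $\lambda$, arrival times $0<\sigma_1<\sigma_2<\cdots$, and natural filtration $\mathcal F_t=\sigma(N_s:s\le t)$. Let $F:[0,\infty)\to[0,\infty)$ be strictly increasing and strictly convex with $F(0)=0$. For $k\in\{0,1,\dots\}$ let $\mathcal A_k$ be the set of $(\mathcal F_t)$-adapted, integer-valued, nonnegative, non-increasing processes $\xi$ with $\xi_0=k$ whose values change only at arrival times of $N$, and $v(k,T)=\inf_{\xi\in\mathcal A_k}\mathbb E[\sum_{i:\sigma_i\le T}F(\xi_{\sigma_i-}-\xi_{\sigma_i})+F(\xi_T)]$. *)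

theory Defs
  imports "HOL-Probability.Probability"
begin

definition strictly_convex_on :: "real set \<Rightarrow> (real \<Rightarrow> real) \<Rightarrow> bool" where
  "strictly_convex_on S f \<longleftrightarrow> (\<forall>x\<in>S. \<forall>y\<in>S. \<forall>u::real. x \<noteq> y \<and> 0 < u \<and> u < 1 \<longrightarrow>
      f (u * x + (1 - u) * y) < u * f x + (1 - u) * f y)"

text \<open>Canonical Poisson process of intensity l: the sample point is the sequence of
  i.i.d. Exp(l) interarrival times.\<close>
definition poisson_space :: "real \<Rightarrow> (nat \<Rightarrow> real) measure" where
  "poisson_space l = PiM UNIV (\<lambda>_. density lborel (exponential_density l))"

text \<open>arrival i = sigma_(i+1), the (i+1)-th arrival time.\<close>
definition arrival :: "nat \<Rightarrow> (nat \<Rightarrow> real) \<Rightarrow> real" where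
  "arrival i \<omega> = (\<Sum>j\<le>i. \<omega> j)"

definition count_proc :: "real \<Rightarrow> (nat \<Rightarrow> real) \<Rightarrow> nat" where
  "count_proc t \<omega> = card {i. arrival i \<omega> \<le> t}"

definition nat_filtration :: "real \<Rightarrow> real \<Rightarrow> (nat \<Rightarrow> real) measure" where
  "nat_filtration l t = sigma (space (poisson_space l))
     {count_proc s -` A \<inter> space (poisson_space l) | s A. 0 \<le> s \<and> s \<le> t}"

definition admissible :: "real \<Rightarrow> nat \<Rightarrow> (real \<Rightarrow> (nat \<Rightarrow> real) \<Rightarrow> nat) \<Rightarrow> bool" where
  "admissible l k \<xi> \<longleftrightarrow>
     (\<forall>t\<ge>0. \<xi> t \<in> measurable (nat_filtration l t) (count_space UNIV)) \<and>
     (\<forall>\<omega>\<in>space (poisson_space l). \<xi> 0 \<omega> = k) \<and>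
     (\<forall>\<omega>\<in>space (poisson_space l). \<forall>s t. 0 \<le> s \<and> s \<le> t \<longrightarrow> \<xi> t \<omega> \<le> \<xi> s \<omega>) \<and>
     (\<forall>\<omega>\<in>space (poisson_space l). \<forall>s t. 0 \<le> s \<and> s < t \<and> \<xi> s \<omega> \<noteq> \<xi> t \<omega> \<longrightarrow>
         (\<exists>i. s < arrival i \<omega> \<and> arrival i \<omega> \<le> t))"

text \<open>Pathwise cost; the left limit xi_(sigma-) is taken literally.\<close>
definition cost :: "(real \<Rightarrow> real) \<Rightarrow> real \<Rightarrow> (real \<Rightarrow> (nat \<Rightarrow> real) \<Rightarrow> nat) \<Rightarrow> (nat \<Rightarrow> real) \<Rightarrow> real" where
  "cost F T \<xi> \<omega> =
     (\<Sum>i\<in>{i. arrival i \<omega> \<le> T}.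
        F (Lim (at_left (arrival i \<omega>)) (\<lambda>s. real (\<xi> s \<omega>)) - real (\<xi> (arrival i \<omega>) \<omega>)))
     + F (real (\<xi> T \<omega>))"

definition value_fn :: "(real \<Rightarrow> real) \<Rightarrow> real \<Rightarrow> nat \<Rightarrow> real \<Rightarrow> ennreal" where
  "value_fn F l k T = (INF \<xi>\<in>{\<xi>. admissible l k \<xi>}.
       \<integral>\<^sup>+ \<omega>. ennreal (cost F T \<xi> \<omega>) \<partial>(poisson_space l))"

end

theory Submission
  imports Defs
begin

text \<open>On a path with \<open>m = N(T)\<close> arrivals in \<open>[0, T]\<close>, an admissible strategy is constant
  between arrival times, so its cost is \<open>F\<close> summed over \<open>m + 1\<close> natural numbers adding up
  to \<open>k\<close>: the \<open>m\<close> jumps and the terminal value. One of them is at least \<open>k / (m + 1)\<close>, which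
  by monotonicity bounds the cost below by \<open>F (k / (m + 1))\<close>; convexity and \<open>F 0 = 0\<close> give
  \<open>F d \<ge> d F 1\<close>, which bounds it below by \<open>k F 1\<close>. Almost surely the interarrival times are
  positive and \<open>N(T)\<close> is finite (the Erlang distribution functions at \<open>T\<close> tend to \<open>0\<close>), so
  integrating the pathwise bound over the events \<open>{N(T) = n}\<close>, \<open>n < k - 1\<close>, and
  \<open>{N(T) \<ge> k - 1}\<close> gives the theorem.\<close>

lemma strictly_convex_on_ge_mult_at_one:
  fixes F :: "real \<Rightarrow> real"
  assumes "strictly_convex_on {0..} F" "F 0 = 0" "1 \<le> x"
  shows "x * F 1 \<le> F x"
proof (cases "x = 1")
  case False
  with assms(3) have x: "x > 1" by simp
  have "F ((1 / x) * x + (1 - 1 / x) * 0) < (1 / x) * F x + (1 - 1 / x) * F 0"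
    using assms(1)[unfolded strictly_convex_on_def, rule_format, of x 0 "1 / x"] x by simp
  then show ?thesis
    using x assms(2) by (simp add: field_simps)
qed simp

lemma sum_of_nat_mult_le_sum_strictly_convex:
  fixes F :: "real \<Rightarrow> real" and p :: "'a \<Rightarrow> nat"
  assumes "strictly_convex_on {0..} F" "F 0 = 0"
  shows "real (\<Sum>i\<in>I. p i) * F 1 \<le> (\<Sum>i\<in>I. F (real (p i)))"
proof -
  have "real (p i) * F 1 \<le> F (real (p i))" for i
    using strictly_convex_on_ge_mult_at_one[OF assms, of "real (p i)"] assms(2)
    by (cases "p i = 0") auto
  then show ?thesis
    by (simp add: sum_distrib_right sum_mono)
qed

lemma mono_average_le_sum:
  fixes F :: "real \<Rightarrow> real" and p :: "'a \<Rightarrow> real"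
  assumes "finite I" "I \<noteq> {}" "\<And>i. i \<in> I \<Longrightarrow> 0 \<le> p i"
    and "\<forall>x\<ge>0. 0 \<le> F x" "mono_on {0..} F"
  shows "F ((\<Sum>i\<in>I. p i) / card I) \<le> (\<Sum>i\<in>I. F (p i))"
proof -
  obtain j where j: "j \<in> I" "(\<Sum>i\<in>I. p i) / card I \<le> p j"
  proof (rule ccontr)
    assume "\<not> thesis"
    with that have "\<forall>j\<in>I. p j < (\<Sum>i\<in>I. p i) / card I" by force
    then have "(\<Sum>i\<in>I. p i) < (\<Sum>i\<in>I. (\<Sum>i\<in>I. p i) / card I)"
      using assms(1,2) by (intro sum_strict_mono) auto
    then show False using assms(1,2) by simp
  qed
  have "0 \<le> (\<Sum>i\<in>I. p i) / card I"
    using assms(3) by (simp add: sum_nonneg)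
  then have "F ((\<Sum>i\<in>I. p i) / card I) \<le> F (p j)"
    using j by (intro mono_onD[OF assms(5)]) auto
  also have "\<dots> \<le> (\<Sum>i\<in>I. F (p i))"
    using j assms by (intro member_le_sum) auto
  finally show ?thesis .
qed

lemma staircase_cost_lower_bounds:
  fixes F :: "real \<Rightarrow> real" and y :: "nat \<Rightarrow> nat"
  assumes "\<And>i. i < m \<Longrightarrow> y (Suc i) \<le> y i"
    and "\<forall>x\<ge>0. 0 \<le> F x" "mono_on {0..} F" "strictly_convex_on {0..} F" "F 0 = 0"
  defines "C \<equiv> (\<Sum>i<m. F (real (y i) - real (y (Suc i)))) + F (real (y m))"
  shows "F (real (y 0) / real (m + 1)) \<le> C" and "real (y 0) * F 1 \<le> C"
proof -
  define d where "d i = (if i < m then y i - y (Suc i) else y m)" for i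
  have "(\<Sum>i<m. real (d i)) = (\<Sum>i<m. real (y i) - real (y (Suc i)))"
    using assms(1) by (intro sum.cong) (auto simp: d_def of_nat_diff)
  then have "(\<Sum>i\<le>m. real (d i)) = real (y 0)"
    by (simp add: lessThan_Suc_atMost[symmetric] sum_lessThan_telescope'[of "\<lambda>i. real (y i)"] d_def)
  then have sum_d: "(\<Sum>i\<le>m. d i) = y 0"
    by (metis of_nat_eq_iff of_nat_sum)
  have "(\<Sum>i<m. F (real (y i) - real (y (Suc i)))) = (\<Sum>i<m. F (real (d i)))"
    using assms(1) by (intro sum.cong) (auto simp: d_def of_nat_diff)
  then have C: "C = (\<Sum>i\<le>m. F (real (d i)))"
    by (simp add: C_def lessThan_Suc_atMost[symmetric] d_def)
  show "F (real (y 0) / real (m + 1)) \<le> C"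
    using mono_average_le_sum[of "{..m}" "\<lambda>i. real (d i)" F] assms(2,3)
    by (simp add: C sum_d[symmetric])
  show "real (y 0) * F 1 \<le> C"
    using sum_of_nat_mult_le_sum_strictly_convex[OF assms(4,5), of d "{..m}"]
    by (simp add: C sum_d)
qed

text \<open>\<open>epoch i \<omega>\<close> is the paper's \<open>\<sigma>\<^sub>i\<close> (with \<open>\<sigma>\<^sub>0 = 0\<close>), one index behind \<open>arrival\<close>.\<close>

definition epoch :: "nat \<Rightarrow> (nat \<Rightarrow> real) \<Rightarrow> real" where
  "epoch i \<omega> = (\<Sum>j<i. \<omega> j)"

lemma arrival_eq_epoch_Suc: "arrival i \<omega> = epoch (Suc i) \<omega>"
  by (simp add: arrival_def epoch_def lessThan_Suc_atMost)

lemma epoch_nonneg: "(\<And>j. 0 \<le> \<omega> j) \<Longrightarrow> 0 \<le> epoch i \<omega>"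
  by (simp add: epoch_def sum_nonneg)

lemma strict_mono_epoch: "(\<And>j. 0 < \<omega> j) \<Longrightarrow> strict_mono (\<lambda>i. epoch i \<omega>)"
  by (simp add: strict_mono_Suc_iff epoch_def)

lemma epoch_less_epoch_iff: "(\<And>j. 0 < \<omega> j) \<Longrightarrow> epoch i \<omega> < epoch j \<omega> \<longleftrightarrow> i < j"
  by (rule strict_mono_less[OF strict_mono_epoch])

lemma epoch_le_epoch_iff: "(\<And>j. 0 < \<omega> j) \<Longrightarrow> epoch i \<omega> \<le> epoch j \<omega> \<longleftrightarrow> i \<le> j"
  by (rule strict_mono_less_eq[OF strict_mono_epoch])

lemma arrivals_le_eq_lessThan_count_proc:
  assumes pos: "\<And>j. 0 < \<omega> j" and "T < arrival n \<omega>"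
  shows "{i. arrival i \<omega> \<le> T} = {..<count_proc T \<omega>}"
proof -
  define m where "m = (LEAST j. T < arrival j \<omega>)"
  have "T < arrival m \<omega>"
    unfolding m_def by (rule LeastI) fact
  have "arrival i \<omega> \<le> T \<longleftrightarrow> i < m" for i
  proof
    assume "arrival i \<omega> \<le> T"
    with \<open>T < arrival m \<omega>\<close> have "arrival i \<omega> < arrival m \<omega>"
      by simp
    then show "i < m"
      by (simp add: arrival_eq_epoch_Suc epoch_less_epoch_iff[of \<omega>, OF pos])
  next
    assume "i < m"
    then show "arrival i \<omega> \<le> T"
      using not_less_Least[of i "\<lambda>j. T < arrival j \<omega>"] by (simp add: m_def)
  qed
  then show ?thesis
    by (simp add: count_proc_def lessThan_def)
qed

lemma epoch_count_proc_bounds: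
  assumes pos: "\<And>j. 0 < \<omega> j" and "T < arrival n \<omega>" "0 \<le> T"
  shows "epoch (count_proc T \<omega>) \<omega> \<le> T" and "T < epoch (Suc (count_proc T \<omega>)) \<omega>"
proof -
  note S = arrivals_le_eq_lessThan_count_proc[OF assms(1,2)]
  show "epoch (count_proc T \<omega>) \<omega> \<le> T"
  proof (cases "count_proc T \<omega>")
    case (Suc m)
    then have "m \<in> {i. arrival i \<omega> \<le> T}"
      by (simp add: S)
    then show ?thesis
      using Suc by (simp add: arrival_eq_epoch_Suc)
  qed (simp add: epoch_def \<open>0 \<le> T\<close>)
  have "count_proc T \<omega> \<notin> {i. arrival i \<omega> \<le> T}"
    by (simp add: S)
  then show "T < epoch (Suc (count_proc T \<omega>)) \<omega>"
    by (simp add: arrival_eq_epoch_Suc)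
qed

lemma admissibleD:
  assumes "admissible l k \<xi>" "\<omega> \<in> space (poisson_space l)"
  shows admissible_initial: "\<xi> 0 \<omega> = k"
    and admissible_antimono: "\<And>s t. 0 \<le> s \<Longrightarrow> s \<le> t \<Longrightarrow> \<xi> t \<omega> \<le> \<xi> s \<omega>"
    and admissible_jumps_at_arrivals:
      "\<And>s t. 0 \<le> s \<Longrightarrow> s < t \<Longrightarrow> \<xi> s \<omega> \<noteq> \<xi> t \<omega> \<Longrightarrow> \<exists>i. s < arrival i \<omega> \<and> arrival i \<omega> \<le> t"
  using assms unfolding admissible_def by blast+

lemma admissible_constant_between_epochs:
  assumes adm: "admissible l k \<xi>" and \<omega>: "\<omega> \<in> space (poisson_space l)"
    and pos: "\<And>j. 0 < \<omega> j" and s: "epoch i \<omega> \<le> s" "s < epoch (Suc i) \<omega>"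
  shows "\<xi> s \<omega> = \<xi> (epoch i \<omega>) \<omega>"
proof (rule ccontr)
  assume jump: "\<xi> s \<omega> \<noteq> \<xi> (epoch i \<omega>) \<omega>"
  with s have "epoch i \<omega> < s"
    by (cases "s = epoch i \<omega>") auto
  with jump obtain j where "epoch i \<omega> < epoch (Suc j) \<omega>" "epoch (Suc j) \<omega> < epoch (Suc i) \<omega>"
    using admissible_jumps_at_arrivals[OF adm \<omega>, of "epoch i \<omega>" s] epoch_nonneg[of \<omega> i] pos s(2)
    by (force simp: arrival_eq_epoch_Suc less_imp_le)
  then show False
    by (simp add: epoch_less_epoch_iff[of \<omega>, OF pos])
qed

lemma admissible_left_limit_at_arrival:
  assumes adm: "admissible l k \<xi>" and \<omega>: "\<omega> \<in> space (poisson_space l)"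
    and pos: "\<And>j. 0 < \<omega> j"
  shows "Lim (at_left (arrival i \<omega>)) (\<lambda>s. real (\<xi> s \<omega>)) = real (\<xi> (epoch i \<omega>) \<omega>)"
proof (rule tendsto_Lim)
  have "epoch i \<omega> < arrival i \<omega>"
    by (simp add: arrival_eq_epoch_Suc epoch_less_epoch_iff[of \<omega>, OF pos])
  then have "eventually (\<lambda>s. s \<in> {epoch i \<omega><..<arrival i \<omega>}) (at_left (arrival i \<omega>))"
    by (rule eventually_at_left_real)
  then have "eventually (\<lambda>s. real (\<xi> s \<omega>) = real (\<xi> (epoch i \<omega>) \<omega>)) (at_left (arrival i \<omega>))"
    by eventually_elim
      (simp add: admissible_constant_between_epochs[OF adm \<omega> pos] arrival_eq_epoch_Suc)
  then show "((\<lambda>s. real (\<xi> s \<omega>)) \<longlongrightarrow> real (\<xi> (epoch i \<omega>) \<omega>)) (at_left (arrival i \<omega>))"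
    by (rule tendsto_eventually)
qed simp

lemma cost_eq_staircase:
  assumes adm: "admissible l k \<xi>" and \<omega>: "\<omega> \<in> space (poisson_space l)"
    and pos: "\<And>j. 0 < \<omega> j" and "T < arrival n \<omega>" "0 \<le> T"
  defines "y \<equiv> \<lambda>i. \<xi> (epoch i \<omega>) \<omega>" and "m \<equiv> count_proc T \<omega>"
  shows "cost F T \<xi> \<omega> = (\<Sum>i<m. F (real (y i) - real (y (Suc i)))) + F (real (y m))"
proof -
  have "\<xi> T \<omega> = y m"
    using admissible_constant_between_epochs[OF adm \<omega> pos epoch_count_proc_bounds[OF pos assms(4,5)]]
    by (simp add: y_def m_def)
  then show ?thesis
    unfolding cost_def arrivals_le_eq_lessThan_count_proc[OF pos assms(4)]
    by (simp add: m_def y_def admissible_left_limit_at_arrival[OF adm \<omega> pos, unfolded arrival_eq_epoch_Suc]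
        arrival_eq_epoch_Suc)
qed

lemma cost_lower_bounds:
  fixes F :: "real \<Rightarrow> real"
  assumes adm: "admissible l k \<xi>" and \<omega>: "\<omega> \<in> space (poisson_space l)"
    and pos: "\<And>j. 0 < \<omega> j" and "T < arrival n \<omega>" "0 \<le> T"
    and "\<forall>x\<ge>0. 0 \<le> F x" "strict_mono_on {0..} F" "strictly_convex_on {0..} F" "F 0 = 0"
  shows "F (real k / real (count_proc T \<omega> + 1)) \<le> cost F T \<xi> \<omega>"
    and "real k * F 1 \<le> cost F T \<xi> \<omega>"
proof -
  define y where "y i = \<xi> (epoch i \<omega>) \<omega>" for i
  have "y (Suc i) \<le> y i" for i
    unfolding y_def using epoch_nonneg[of \<omega> i] pos
    by (intro admissible_antimono[OF adm \<omega>]) (auto simp: less_imp_le epoch_le_epoch_iff)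
  moreover have "y 0 = k"
    by (simp add: y_def epoch_def admissible_initial[OF adm \<omega>])
  ultimately show "F (real k / real (count_proc T \<omega> + 1)) \<le> cost F T \<xi> \<omega>"
    and "real k * F 1 \<le> cost F T \<xi> \<omega>"
    using staircase_cost_lower_bounds[of "count_proc T \<omega>" y F] assms(6-9)
    by (simp_all add: cost_eq_staircase[OF adm \<omega> pos assms(4,5)] y_def strict_mono_on_imp_mono_on)
qed

lemma (in product_prob_space) indep_vars_components:
  assumes "I \<noteq> {}"
  shows "P.indep_vars M (\<lambda>i \<omega>. \<omega> i) I"
proof (subst P.indep_vars_iff_distr_eq_PiM'[OF assms])
  have "distr (PiM I M) (PiM I M) (\<lambda>\<omega>. \<lambda>i\<in>I. \<omega> i) = distr (PiM I M) (PiM I M) (\<lambda>\<omega>. \<omega>)"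
    by (rule distr_cong) (auto simp: space_PiM PiE_def extensional_restrict)
  then show "distr (PiM I M) (PiM I M) (\<lambda>\<omega>. \<lambda>i\<in>I. \<omega> i) = PiM I (\<lambda>i. distr (PiM I M) (M i) (\<lambda>\<omega>. \<omega> i))"
    by (simp add: PiM_component cong: PiM_cong)
qed simp

lemma product_prob_space_exponential:
  "0 < l \<Longrightarrow> product_prob_space (\<lambda>_. density lborel (exponential_density l))"
  by (intro product_prob_spaceI prob_space_exponential_density)

lemma prob_space_poisson_space:
  assumes "0 < l"
  shows "prob_space (poisson_space l)"
proof -
  interpret product_prob_space "\<lambda>_. density lborel (exponential_density l)" UNIV
    using assms by (rule product_prob_space_exponential)
  show ?thesis
    unfolding poisson_space_def by (rule P.prob_space_axioms)
qed

lemma measurable_arrival [measurable]: "arrival n \<in> borel_measurable (poisson_space l)"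
  unfolding poisson_space_def arrival_def[abs_def] by measurable

lemma AE_poisson_space_interarrival_pos:
  assumes "0 < l"
  shows "AE \<omega> in poisson_space l. \<forall>j. 0 < \<omega> j"
proof -
  interpret product_prob_space "\<lambda>_. density lborel (exponential_density l)" UNIV
    using assms by (rule product_prob_space_exponential)
  have "AE x in lborel. 0 < ennreal (exponential_density l x) \<longrightarrow> 0 < x"
    using AE_lborel_singleton[of 0]
    by eventually_elim (auto simp: exponential_density_def)
  then have "AE x in density lborel (exponential_density l). 0 < x"
    by (subst AE_density) (auto simp: exponential_density_def)
  then show ?thesis
    unfolding poisson_space_def AE_all_countable by (auto intro: AE_component)
qed

lemma arrival_erlang_distributed:
  assumes l: "0 < l"
  shows "distributed (poisson_space l) lborel (arrival n) (erlang_density n l)"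
proof -
  let ?D = "density lborel (exponential_density l)"
  interpret product_prob_space "\<lambda>_. ?D" "UNIV :: nat set"
    using l by (rule product_prob_space_exponential)
  have sets_D: "sets ?D = sets borel"
    by simp
  have indep: "P.indep_vars (\<lambda>_. borel) (\<lambda>i \<omega>. \<omega> i) UNIV"
    using indep_vars_components[OF UNIV_not_empty]
    unfolding P.indep_vars_def2 by (simp add: measurable_cong_sets[OF refl sets_D])
  have exp: "distributed (PiM UNIV (\<lambda>_. ?D)) lborel (\<lambda>\<omega>. \<omega> i) (exponential_density l)" for i :: nat
  proof -
    have "distr (PiM UNIV (\<lambda>_. ?D)) lborel (\<lambda>\<omega>. \<omega> i) = distr (PiM UNIV (\<lambda>_. ?D)) ?D (\<lambda>\<omega>. \<omega> i)"
      by (rule distr_cong) auto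
    then show ?thesis
      by (simp add: distributed_def PiM_component)
  qed
  have "distributed (PiM UNIV (\<lambda>_. ?D)) lborel (\<lambda>\<omega>. \<Sum>i\<in>{..n}. \<omega> i) (erlang_density (card {..n} - 1) l)"
    by (rule P.exponential_distributed_sum[OF _ _ l exp P.indep_vars_subset[OF indep]]) auto
  then show ?thesis
    by (simp add: poisson_space_def arrival_def[abs_def])
qed

lemma erlang_CDF_tendsto_0:
  assumes "0 \<le> x"
  shows "(\<lambda>k. erlang_CDF k l x) \<longlonglongrightarrow> 0"
proof -
  have "(\<lambda>k. \<Sum>n\<le>k. (l * x) ^ n / fact n) \<longlonglongrightarrow> exp (l * x)"
    using exp_converges[of "l * x"]
    by (simp add: sums_def_le divide_inverse_commute scaleR_conv_of_real)
  then have "(\<lambda>k. 1 - exp (- (l * x)) * (\<Sum>n\<le>k. (l * x) ^ n / fact n)) \<longlonglongrightarrow> 1 - exp (- (l * x)) * exp (l * x)"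
    by (intro tendsto_intros)
  then show ?thesis
    using assms by (simp add: erlang_CDF_def sum_distrib_left exp_minus algebra_simps)
qed

lemma AE_poisson_space_arrival_gt:
  assumes l: "0 < l" and T: "0 \<le> T"
  shows "AE \<omega> in poisson_space l. \<exists>n. T < arrival n \<omega>"
proof -
  interpret prob_space "poisson_space l"
    using l by (rule prob_space_poisson_space)
  let ?E = "{\<omega>\<in>space (poisson_space l). \<forall>n. arrival n \<omega> \<le> T}"
  have E: "?E \<in> sets (poisson_space l)"
    by measurable
  have "prob ?E \<le> erlang_CDF n l T" for n
  proof -
    have "prob ?E \<le> prob {\<omega>\<in>space (poisson_space l). arrival n \<omega> \<le> T}"
      by (rule finite_measure_mono) auto
    then show ?thesis
      by (simp add: erlang_distributed_le[OF arrival_erlang_distributed[OF l] l T])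
  qed
  then have "prob ?E = 0"
    using LIMSEQ_le_const[OF erlang_CDF_tendsto_0[OF T]] measure_nonneg[of _ ?E]
    by (meson order_antisym)
  then show ?thesis
    using E by (intro AE_I[where N="?E"]) (auto simp: emeasure_eq_measure not_less)
qed

lemma nn_integral_ge_sum_measure_level_sets:
  fixes g :: "'a \<Rightarrow> 'i" and c :: "'i \<Rightarrow> real"
  assumes "finite_measure M" "finite I" "\<And>i. i \<in> I \<Longrightarrow> 0 \<le> c i"
    and bound: "AE \<omega> in M. g \<omega> \<in> I \<longrightarrow> c (g \<omega>) \<le> f \<omega>"
  shows "ennreal (\<Sum>i\<in>I. c i * measure M {\<omega>\<in>space M. g \<omega> = i}) \<le> (\<integral>\<^sup>+\<omega>. ennreal (f \<omega>) \<partial>M)"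
proof -
  interpret finite_measure M by fact
  \<comment> \<open>A non-measurable level set has measure 0, so it may be replaced by the empty set.\<close>
  define E where "E i = (if {\<omega>\<in>space M. g \<omega> = i} \<in> sets M then {\<omega>\<in>space M. g \<omega> = i} else {})" for i
  have E [measurable]: "E i \<in> sets M" for i
    by (simp add: E_def)
  have measure_E: "measure M (E i) = measure M {\<omega>\<in>space M. g \<omega> = i}" for i
    by (simp add: E_def measure_notin_sets)
  have "ennreal (\<Sum>i\<in>I. c i * measure M {\<omega>\<in>space M. g \<omega> = i}) = (\<Sum>i\<in>I. ennreal (c i * measure M (E i)))"
    using assms(3) by (simp add: measure_E)
  also have "\<dots> = (\<Sum>i\<in>I. ennreal (c i) * emeasure M (E i))"
    using assms(3) by (simp add: emeasure_eq_measure ennreal_mult)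
  also have "\<dots> = (\<Sum>i\<in>I. \<integral>\<^sup>+\<omega>. ennreal (c i) * indicator (E i) \<omega> \<partial>M)"
    by (simp add: nn_integral_cmult_indicator)
  also have "\<dots> = (\<integral>\<^sup>+\<omega>. (\<Sum>i\<in>I. ennreal (c i) * indicator (E i) \<omega>) \<partial>M)"
    by (rule nn_integral_sum[symmetric]) measurable
  also have "\<dots> \<le> (\<integral>\<^sup>+\<omega>. ennreal (f \<omega>) \<partial>M)"
  proof (rule nn_integral_mono_AE)
    show "AE \<omega> in M. (\<Sum>i\<in>I. ennreal (c i) * indicator (E i) \<omega>) \<le> ennreal (f \<omega>)"
      using bound
    proof eventually_elim
      case (elim \<omega>)
      have "(\<Sum>i\<in>I. ennreal (c i) * indicator (E i) \<omega>) = (\<Sum>i\<in>I. if i = g \<omega> then ennreal (c i) * indicator (E i) \<omega> else 0)"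
        by (intro sum.cong) (auto simp: E_def)
      also have "\<dots> = (if g \<omega> \<in> I then ennreal (c (g \<omega>)) * indicator (E (g \<omega>)) \<omega> else 0)"
        using assms(2) by (simp add: sum.delta')
      also have "\<dots> \<le> ennreal (f \<omega>)"
        using elim by (auto simp: indicator_def intro: ennreal_leI)
      finally show ?case .
    qed
  qed
  finally show ?thesis .
qed

lemma sum_measure_min_level_sets:
  fixes h :: "'a \<Rightarrow> nat"
  shows "(\<Sum>n<Suc m. c n * measure M {\<omega>\<in>space M. min (h \<omega>) m = n}) =
    (\<Sum>n<m. c n * measure M {\<omega>\<in>space M. h \<omega> = n}) + c m * measure M {\<omega>\<in>space M. h \<omega> \<ge> m}"
proof -
  have "{\<omega>\<in>space M. min (h \<omega>) m = n} = {\<omega>\<in>space M. h \<omega> = n}" if "n < m" for n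
    using that by auto
  then have "(\<Sum>n<m. c n * measure M {\<omega>\<in>space M. min (h \<omega>) m = n}) =
      (\<Sum>n<m. c n * measure M {\<omega>\<in>space M. h \<omega> = n})"
    by (intro sum.cong) auto
  moreover have "{\<omega>\<in>space M. min (h \<omega>) m = m} = {\<omega>\<in>space M. h \<omega> \<ge> m}"
    by auto
  ultimately show ?thesis
    by simp
qed

lemma AE_cost_lower_bound:
  fixes F :: "real \<Rightarrow> real"
  assumes "0 < l" "0 \<le> T" "admissible l k \<xi>"
    and "\<forall>x\<ge>0. 0 \<le> F x" "strict_mono_on {0..} F" "strictly_convex_on {0..} F" "F 0 = 0"
  shows "AE \<omega> in poisson_space l.
    (if count_proc T \<omega> < k - 1 then F (real k / real (count_proc T \<omega> + 1)) else real k * F 1)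
      \<le> cost F T \<xi> \<omega>"
  using AE_space AE_poisson_space_interarrival_pos[OF assms(1)] AE_poisson_space_arrival_gt[OF assms(1,2)]
proof eventually_elim
  case (elim \<omega>)
  then show ?case
    using cost_lower_bounds[OF assms(3) _ _ _ assms(2) assms(4-7)] by auto
qed

theorem lemma2p1:
  fixes F :: "real \<Rightarrow> real" and l T :: real and k :: nat
  assumes "l > 0"
    and "\<forall>x\<ge>0. F x \<ge> 0"
    and "strict_mono_on {0..} F"
    and "strictly_convex_on {0..} F"
    and "F 0 = 0"
    and "k \<ge> 1"
    and "T \<ge> 0"
  shows "value_fn F l k T \<ge> ennreal
     ((\<Sum>n<k-1. F (real k / real (n+1)) *
          measure (poisson_space l) {\<omega>\<in>space (poisson_space l). count_proc T \<omega> = n})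
      + real k * F 1 *
          measure (poisson_space l) {\<omega>\<in>space (poisson_space l). count_proc T \<omega> \<ge> k-1})"
proof -
  let ?M = "poisson_space l"
  define c where "c n = (if n < k - 1 then F (real k / real (n + 1)) else real k * F 1)" for n
  have "ennreal ((\<Sum>n<k - 1. c n * measure ?M {\<omega>\<in>space ?M. count_proc T \<omega> = n})
        + c (k - 1) * measure ?M {\<omega>\<in>space ?M. count_proc T \<omega> \<ge> k - 1})
      \<le> (\<integral>\<^sup>+\<omega>. ennreal (cost F T \<xi> \<omega>) \<partial>?M)" if "admissible l k \<xi>" for \<xi>
    unfolding sum_measure_min_level_sets[symmetric]
  proof (rule nn_integral_ge_sum_measure_level_sets)
    show "finite_measure ?M"
      using prob_space_poisson_space[OF assms(1)] by (rule prob_space.finite_measure)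
    show "AE \<omega> in ?M. min (count_proc T \<omega>) (k - 1) \<in> {..<Suc (k - 1)} \<longrightarrow>
        c (min (count_proc T \<omega>) (k - 1)) \<le> cost F T \<xi> \<omega>"
      using AE_cost_lower_bound[OF assms(1,7) that assms(2-5)]
      by eventually_elim (auto simp: c_def min_def split: if_splits)
  qed (use assms(2) in \<open>auto simp: c_def\<close>)
  moreover have "(\<Sum>n<k - 1. c n * measure ?M {\<omega>\<in>space ?M. count_proc T \<omega> = n}) =
      (\<Sum>n<k - 1. F (real k / real (n + 1)) * measure ?M {\<omega>\<in>space ?M. count_proc T \<omega> = n})"
    by (intro sum.cong) (auto simp: c_def)
  ultimately show ?thesis
    unfolding value_fn_def by (intro INF_greatest) (simp add: c_def)
qed

end
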